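(* Let $D\subseteq M$ be $\operatorname{dcl}$-independent over $P$, and assume (OP) and (ind)$_D$. Then for every $A\subseteq P$, $\operatorname{cl}_D(A)=\operatorname{dcl}(A\cup D)\cap P$. In particular, $\operatorname{cl}_D$ is a pregeometry on $P$.
   Context: Let $\mathcal M=\langle M,<,+,0,\dots\rangle$ be an o-minimal expansion of an ordered group with a distinguished positive element $1$, in a language $\mathcal L$; $\operatorname{dcl}$ denotes definable closure in $\mathcal M$, and "$\mathcal L_A$-definable" means definable in $\mathcal M$ with parameters from $A\subseteq M$. Fix $P\subseteq M$ and let $\widetilde{\mathcal M}=\langle\mathcal M,P\rangle$; "$A$-definable" (unqualified) means definable in $\widetilde{\mathcal M}$ with parameters from $A\subseteq M$. $M^n$ has the product order topology; $\overline V$ is closure. A set $A$ is $\operatorname{dcl}$-independent over $P$ if no $a\in A$ lies in $\operatorname{dcl}((A\setminus\{a\})\cup P)$. For $D\subseteq M$, $P_{ind(D)}$ has universe $P$ and, for each $\mathcal L$-formula $\phi(x)$ with parameters from $D$, a relation $R_\phi=\{a\in P^{|x|}:\mathcal M\models\phi(a)\}$; for $A\subseteq P$, "$A$-definable in $P_{ind(D)}$" means definable there with parameters from $A$. $\operatorname{cl}_D$ denotes the definable closure operator of the structure $P_{ind(D)}$. (OP): for every $A\subseteq M$ with $A\setminus P$ $\operatorname{dcl}$-independent over $P$ and every $A$-definable $V\subseteq M^n$, $\overline V$ is $\mathcal L_A$-definable. (ind)$_D$: every $X\subseteq P^n$ definable in $P_{ind(D)}$ equals $\bigcup_{i=1}^l(Y_i\cap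 Q_i)$ for some $\mathcal L$-definable $Y_i\subseteq M^n$ and some $Q_i\subseteq P^n$ $\emptyset$-definable in $P_{ind(D)}$. *)

theory Defs
  imports Main
begin

text \<open>Variables are natural numbers. Function symbols are not needed: every
structure is interdefinable with its relational version (graphs of functions).\<close>

datatype 'r fm =
    Eq nat nat
  | Rel 'r "nat list"
  | Neg "'r fm"
  | Conj "'r fm" "'r fm"
  | Ex nat "'r fm"

fun fv :: "'r fm \<Rightarrow> nat set" where
  "fv (Eq i j) = {i, j}"
| "fv (Rel r vs) = set vs"
| "fv (Neg \<phi>) = fv \<phi>"
| "fv (Conj \<phi> \<psi>) = fv \<phi> \<union> fv \<psi>"
| "fv (Ex n \<phi>) = fv \<phi> - {n}"

fun sat :: "'a set \<Rightarrow> ('r \<Rightarrow> 'a list set) \<Rightarrow> (nat \<Rightarrow> 'a) \<Rightarrow> 'r fm \<Rightarrow> bool" where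
  "sat U R e (Eq i j) = (e i = e j)"
| "sat U R e (Rel r vs) = (map e vs \<in> R r)"
| "sat U R e (Neg \<phi>) = (\<not> sat U R e \<phi>)"
| "sat U R e (Conj \<phi> \<psi>) = (sat U R e \<phi> \<and> sat U R e \<psi>)"
| "sat U R e (Ex n \<phi>) = (\<exists>a\<in>U. sat U R (e(n := a)) \<phi>)"

text \<open>X \<subseteq> U^n (tuples as lists of length n) is definable in (U,R) with parameters
from A: there is a formula \<phi>(x_0..x_{n-1}, y_0..y_{k-1}) and parameters b \<in> A^k.\<close>
definition definable_in :: "'a set \<Rightarrow> ('r \<Rightarrow> 'a list set) \<Rightarrow> 'a set \<Rightarrow> nat \<Rightarrow> 'a list set \<Rightarrow> bool" where
  "definable_in U R A n X \<longleftrightarrow>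
     (\<exists>\<phi> ps. set ps \<subseteq> A \<and> fv \<phi> \<subseteq> {..<n + length ps} \<and>
        X = {xs. length xs = n \<and> set xs \<subseteq> U \<and> sat U R (\<lambda>i. (xs @ ps) ! i) \<phi>})"

definition L_def :: "('r \<Rightarrow> 'a list set) \<Rightarrow> 'a set \<Rightarrow> nat \<Rightarrow> 'a list set \<Rightarrow> bool" where
  "L_def R A n X \<longleftrightarrow> definable_in UNIV R A n X"

definition exp_rel :: "('r \<Rightarrow> 'a list set) \<Rightarrow> 'a set \<Rightarrow> 'r option \<Rightarrow> 'a list set" where
  "exp_rel R P s = (case s of None \<Rightarrow> {[p] | p. p \<in> P} | Some r \<Rightarrow> R r)"

definition P_def :: "('r \<Rightarrow> 'a list set) \<Rightarrow> 'a set \<Rightarrow> 'a set \<Rightarrow> nat \<Rightarrow> 'a list set \<Rightarrow> bool" where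
  "P_def R P A n X \<longleftrightarrow> definable_in UNIV (exp_rel R P) A n X"

definition dcl :: "('r \<Rightarrow> 'a list set) \<Rightarrow> 'a set \<Rightarrow> 'a set" where
  "dcl R A = {b. L_def R A 1 {[b]}}"

definition dcl_indep :: "('r \<Rightarrow> 'a list set) \<Rightarrow> 'a set \<Rightarrow> 'a set \<Rightarrow> bool" where
  "dcl_indep R P A \<longleftrightarrow> (\<forall>a\<in>A. a \<notin> dcl R ((A - {a}) \<union> P))"

text \<open>Closure in M^n for the product order topology (basis: open boxes).\<close>
definition box_closure :: "nat \<Rightarrow> ('a::linorder) list set \<Rightarrow> 'a list set" where
  "box_closure n V = {x. length x = n \<and>
     (\<forall>a b. length a = n \<and> length b = n \<and> (\<forall>i<n. a ! i < x ! i \<and> x ! i < b ! i) \<longrightarrow>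
        (\<exists>v\<in>V. length v = n \<and> (\<forall>i<n. a ! i < v ! i \<and> v ! i < b ! i)))}"

definition is_point_or_interval :: "('a::linorder) set \<Rightarrow> bool" where
  "is_point_or_interval I \<longleftrightarrow> (\<exists>a. I = {a}) \<or> (\<exists>a b. a < b \<and> I = {a<..<b}) \<or>
     (\<exists>a. I = {a<..}) \<or> (\<exists>b. I = {..<b}) \<or> I = UNIV"

text \<open>R is an o-minimal expansion of the ordered group (UNIV,<,+,0) with a distinguished
positive element 1: the language contains symbols for <, (the graph of) +, and the constant 1
(0 is \<emptyset>-definable from +), and every definable subset of M is a finite union of points and
open intervals.\<close>
definition omin_og :: "('r \<Rightarrow> ('a::linordered_ab_group_add) list set) \<Rightarrow> bool" where
  "omin_og R \<longleftrightarrow>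
     (\<exists>lt pl one c. R lt = {[x, y] | x y. x < y} \<and> R pl = {[x, y, z] | x y z. z = x + y} \<and>
        0 < c \<and> R one = {[c]}) \<and>
     (\<forall>X. L_def R UNIV 1 X \<longrightarrow>
        (\<exists>\<I>. finite \<I> \<and> (\<forall>I\<in>\<I>. is_point_or_interval I) \<and> X = (\<lambda>x. [x]) ` \<Union>\<I>))"

definition OP :: "('r \<Rightarrow> ('a::linorder) list set) \<Rightarrow> 'a set \<Rightarrow> bool" where
  "OP R P \<longleftrightarrow> (\<forall>A n V. dcl_indep R P (A - P) \<and> P_def R P A n V \<longrightarrow>
                  L_def R A n (box_closure n V))"

text \<open>Relation symbols are triples (\<phi>, k, b): an L-formula \<phi>(x_0..x_{k-1}, y) with parameters
b from D; R_\<phi> = {a \<in> P^k. M \<Turnstile> \<phi>(a,b)}. Triples not of this form get the empty relation.\<close>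
definition ind_rel :: "('r \<Rightarrow> 'a list set) \<Rightarrow> 'a set \<Rightarrow> 'a set \<Rightarrow> ('r fm \<times> nat \<times> 'a list) \<Rightarrow> 'a list set" where
  "ind_rel R P D s = (case s of (\<phi>, k, b) \<Rightarrow>
     (if set b \<subseteq> D \<and> fv \<phi> \<subseteq> {..<k + length b}
      then {a. length a = k \<and> set a \<subseteq> P \<and> sat UNIV R (\<lambda>i. (a @ b) ! i) \<phi>}
      else {}))"

definition Pind_def :: "('r \<Rightarrow> 'a list set) \<Rightarrow> 'a set \<Rightarrow> 'a set \<Rightarrow> 'a set \<Rightarrow> nat \<Rightarrow> 'a list set \<Rightarrow> bool" where
  "Pind_def R P D A n X \<longleftrightarrow> definable_in P (ind_rel R P D) A n X"

definition clD :: "('r \<Rightarrow> 'a list set) \<Rightarrow> 'a set \<Rightarrow> 'a set \<Rightarrow> 'a set \<Rightarrow> 'a set" where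
  "clD R P D A = {b \<in> P. Pind_def R P D A 1 {[b]}}"

definition ind_D :: "('r \<Rightarrow> 'a list set) \<Rightarrow> 'a set \<Rightarrow> 'a set \<Rightarrow> bool" where
  "ind_D R P D \<longleftrightarrow> (\<forall>n X. Pind_def R P D P n X \<longrightarrow>
     (\<exists>S. finite S \<and> (\<forall>(Y, Q)\<in>S. L_def R UNIV n Y \<and> Pind_def R P D {} n Q) \<and>
          X = (\<Union>(Y, Q)\<in>S. Y \<inter> Q)))"

definition pregeometry :: "'a set \<Rightarrow> ('a set \<Rightarrow> 'a set) \<Rightarrow> bool" where
  "pregeometry X cl \<longleftrightarrow>
     (\<forall>A. A \<subseteq> X \<longrightarrow> A \<subseteq> cl A \<and> cl A \<subseteq> X) \<and>
     (\<forall>A B. A \<subseteq> B \<and> B \<subseteq> X \<longrightarrow> cl A \<subseteq> cl B) \<and>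
     (\<forall>A. A \<subseteq> X \<longrightarrow> cl (cl A) = cl A) \<and>
     (\<forall>A. A \<subseteq> X \<longrightarrow> (\<forall>a\<in>cl A. \<exists>F. finite F \<and> F \<subseteq> A \<and> a \<in> cl F)) \<and>
     (\<forall>A a b. A \<subseteq> X \<and> a \<in> X \<and> b \<in> X \<and> b \<in> cl (insert a A) \<and> b \<notin> cl A \<longrightarrow>
        a \<in> cl (insert b A))"

end

theory Submission
  imports Defs "HOL-Library.Lub_Glb"
begin

text \<open>
  If b is in cl_D(A), then the singleton {b} is definable in <M,P> over A \<union> D, and
  (A \<union> D) - P = D is dcl-independent over P; so by (OP) its closure, which is {b} itself,
  is L-definable over A \<union> D. Conversely, an L-formula over A \<union> D that defines an element
  of P becomes, once its parameters are split into those from A and those from D, a relation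
  of P_ind(D) with parameters from A.

  Of these only exchange is not formal. Write b = f(a) with f definable over C, and assume
  b \<notin> dcl(C) and a \<notin> dcl(C b). A definable set is a neighbourhood of each of its points
  that are not definable over its parameters, because its non-interior points are finitely
  many. Hence f is constantly b near a, so b lies in the C-definable set of values that f
  takes constantly on some interval, and then b is interior to that set. But by definable
  connectedness f is constant on each of the finitely many pieces of the definable set where
  it is locally constant with values near b, so it takes only finitely many values there,
  whereas every point of an interval around b is such a value.
\<close>

section \<open>Renaming variables of formulas\<close>

lemma finite_fv: "finite (fv \<phi>)"
  by (induction \<phi>) auto

lemma sat_coincide:
  "(\<And>v. v \<in> fv \<phi> \<Longrightarrow> e v = e' v) \<Longrightarrow> sat U I e \<phi> = sat U I e' \<phi>"
proof (induction \<phi> arbitrary: e e')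
  case (Eq i j)
  then show ?case by simp
next
  case (Rel r vs)
  have eq: "map e vs = map e' vs" by (rule map_cong) (use Rel.prems in auto)
  show ?case by (simp only: sat.simps eq)
next
  case (Neg \<phi>)
  have "sat U I e \<phi> = sat U I e' \<phi>" by (rule Neg.IH) (use Neg.prems in simp)
  then show ?case by simp
next
  case (Conj \<phi>1 \<phi>2)
  have "sat U I e \<phi>1 = sat U I e' \<phi>1" by (rule Conj.IH(1)) (use Conj.prems in simp)
  moreover have "sat U I e \<phi>2 = sat U I e' \<phi>2" by (rule Conj.IH(2)) (use Conj.prems in simp)
  ultimately show ?case by simp
next
  case (Ex n \<phi>)
  have "\<And>a. sat U I (e(n := a)) \<phi> = sat U I (e'(n := a)) \<phi>"
    by (rule Ex.IH) (use Ex.prems in auto)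
  then show ?case by simp
qed

lemma ex_fm_renaming:
  "\<exists>\<psi>. fv \<psi> \<subseteq> g ` fv \<phi> \<and> (\<forall>e. sat U I e \<psi> = sat U I (e \<circ> g) \<phi>)"
proof (induction \<phi> arbitrary: g)
  case (Eq i j)
  show ?case by (rule exI[of _ "Eq (g i) (g j)"]) auto
next
  case (Rel r vs)
  show ?case by (rule exI[of _ "Rel r (map g vs)"]) (simp add: comp_def)
next
  case (Neg \<phi>)
  then obtain \<psi> where "fv \<psi> \<subseteq> g ` fv \<phi>" "\<forall>e. sat U I e \<psi> = sat U I (e \<circ> g) \<phi>"
    by blast
  then show ?case by (intro exI[of _ "Neg \<psi>"]) (simp add: comp_def)
next
  case (Conj \<phi>1 \<phi>2)
  obtain \<psi>1 \<psi>2 where "fv \<psi>1 \<subseteq> g ` fv \<phi>1" "\<forall>e. sat U I e \<psi>1 = sat U I (e \<circ> g) \<phi>1"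
    "fv \<psi>2 \<subseteq> g ` fv \<phi>2" "\<forall>e. sat U I e \<psi>2 = sat U I (e \<circ> g) \<phi>2"
    using Conj.IH by meson
  then show ?case by (intro exI[of _ "Conj \<psi>1 \<psi>2"]) (auto simp: comp_def)
next
  case (Ex n \<phi>)
  \<comment> \<open>the bound variable is renamed to a fresh k, so that no free variable is captured\<close>
  obtain k where k: "k \<notin> g ` fv \<phi>"
    using ex_new_if_finite[OF infinite_UNIV_nat] finite_fv by blast
  obtain \<psi> where \<psi>: "fv \<psi> \<subseteq> (g(n := k)) ` fv \<phi>" "\<forall>e. sat U I e \<psi> = sat U I (e \<circ> g(n := k)) \<phi>"
    using Ex.IH by blast
  have "fv (Ex k \<psi>) \<subseteq> g ` fv (Ex n \<phi>)"
  proof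
    fix v assume "v \<in> fv (Ex k \<psi>)"
    then obtain i where "i \<in> fv \<phi>" "v = (g(n := k)) i" "v \<noteq> k"
      using \<psi>(1) by auto
    then show "v \<in> g ` fv (Ex n \<phi>)" by (cases "i = n") auto
  qed
  moreover have "sat U I e (Ex k \<psi>) = sat U I (e \<circ> g) (Ex n \<phi>)" for e
  proof -
    have "sat U I (e(k := a) \<circ> g(n := k)) \<phi> = sat U I ((e \<circ> g)(n := a)) \<phi>" for a
      by (rule sat_coincide) (use k in auto)
    then show ?thesis using \<psi>(2) by simp
  qed
  ultimately show ?case by blast
qed

lemma sat_params_superlist:
  fixes ps qs :: "'a list"
  assumes "fv \<phi> \<subseteq> {..<n + length ps}" and "set ps \<subseteq> set qs"
  obtains \<psi> where "fv \<psi> \<subseteq> {..<n + length qs}"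
    and "\<And>xs. length xs = n \<Longrightarrow> sat U I (\<lambda>i. (xs @ qs) ! i) \<psi> = sat U I (\<lambda>i. (xs @ ps) ! i) \<phi>"
proof -
  have "\<forall>j<length ps. \<exists>l<length qs. qs ! l = ps ! j"
    using assms(2) by (metis in_set_conv_nth nth_mem subsetD)
  then obtain pos where pos: "\<And>j. j < length ps \<Longrightarrow> pos j < length qs \<and> qs ! pos j = ps ! j"
    by metis
  define g where "g i = (if i < n then i else n + pos (i - n))" for i
  obtain \<psi> where \<psi>: "fv \<psi> \<subseteq> g ` fv \<phi>" "\<forall>e. sat U I e \<psi> = sat U I (e \<circ> g) \<phi>"
    using ex_fm_renaming by blast
  show thesis
  proof (rule that[of \<psi>])
    have "g i < n + length qs" if "i \<in> fv \<phi>" for i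
      using that assms(1) pos[of "i - n"] by (auto simp: g_def)
    then show "fv \<psi> \<subseteq> {..<n + length qs}"
      using \<psi>(1) by auto
    fix xs :: "'a list" assume xs: "length xs = n"
    have "(xs @ qs) ! g v = (xs @ ps) ! v" if "v \<in> fv \<phi>" for v
    proof (cases "v < n")
      case False
      then have "v - n < length ps" using that assms(1) by auto
      then show ?thesis using False xs pos[of "v - n"] by (simp add: g_def nth_append)
    qed (simp add: g_def nth_append xs)
    then have "sat U I ((\<lambda>i. (xs @ qs) ! i) \<circ> g) \<phi> = sat U I (\<lambda>i. (xs @ ps) ! i) \<phi>"
      by (intro sat_coincide) simp
    then show "sat U I (\<lambda>i. (xs @ qs) ! i) \<psi> = sat U I (\<lambda>i. (xs @ ps) ! i) \<phi>"
      using \<psi>(2) by simp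
  qed
qed

text \<open>Only the values of Q on lists of length n matter.\<close>

definition definable_pred :: "('r \<Rightarrow> 'a list set) \<Rightarrow> 'a set \<Rightarrow> nat \<Rightarrow> ('a list \<Rightarrow> bool) \<Rightarrow> bool" where
  "definable_pred R A n Q \<longleftrightarrow> definable_in UNIV R A n {xs. length xs = n \<and> Q xs}"

lemma definable_pred_iff:
  "definable_pred R A n Q \<longleftrightarrow> (\<exists>\<phi> ps. set ps \<subseteq> A \<and> fv \<phi> \<subseteq> {..<n + length ps} \<and>
      (\<forall>xs. length xs = n \<longrightarrow> Q xs = sat UNIV R (\<lambda>i. (xs @ ps) ! i) \<phi>))"
  unfolding definable_pred_def definable_in_def by (simp add: set_eq_iff) blast

lemma definable_predI:
  assumes "set ps \<subseteq> A" "fv \<phi> \<subseteq> {..<n + length ps}"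
    and "\<And>xs. length xs = n \<Longrightarrow> Q xs = sat UNIV R (\<lambda>i. (xs @ ps) ! i) \<phi>"
  shows "definable_pred R A n Q"
  unfolding definable_pred_iff using assms by blast

lemma definable_predE:
  assumes "definable_pred R A n Q"
  obtains ps \<phi> where "set ps \<subseteq> A" "fv \<phi> \<subseteq> {..<n + length ps}"
    and "\<And>xs. length xs = n \<Longrightarrow> Q xs = sat UNIV R (\<lambda>i. (xs @ ps) ! i) \<phi>"
  using assms unfolding definable_pred_iff by blast

lemma definable_pred_cong:
  assumes "definable_pred R A n Q" and "\<And>xs. length xs = n \<Longrightarrow> Q xs = Q' xs"
  shows "definable_pred R A n Q'"
  using assms(1) by (elim definable_predE) (rule definable_predI, use assms(2) in auto)

lemma definable_pred_mono:
  assumes "definable_pred R A n Q" and "A \<subseteq> B"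
  shows "definable_pred R B n Q"
  using assms(1) by (elim definable_predE) (rule definable_predI, use assms(2) in auto)

lemma definable_pred_finite_params:
  assumes "definable_pred R A n Q"
  obtains F where "finite F" "F \<subseteq> A" "definable_pred R F n Q"
  using assms by (elim definable_predE) (metis definable_predI finite_set order_refl)

lemma definable_pred_rel:
  assumes "\<forall>j\<in>set vs. j < n"
  shows "definable_pred R A n (\<lambda>xs. map (\<lambda>j. xs ! j) vs \<in> R r)"
  by (rule definable_predI[where ps = "[]" and \<phi> = "Rel r vs"]) (use assms in auto)

lemma definable_pred_eq:
  assumes "i < n" "j < n"
  shows "definable_pred R A n (\<lambda>xs. xs ! i = xs ! j)"
  by (rule definable_predI[where ps = "[]" and \<phi> = "Eq i j"]) (use assms in auto)

lemma definable_pred_eq_const: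
  assumes "i < n" "p \<in> A"
  shows "definable_pred R A n (\<lambda>xs. xs ! i = p)"
  by (rule definable_predI[where ps = "[p]" and \<phi> = "Eq i n"]) (use assms in \<open>auto simp: nth_append\<close>)

lemma definable_pred_false: "definable_pred R A n (\<lambda>xs. False)"
  by (rule definable_predI[where ps = "[]" and \<phi> = "Neg (Ex 0 (Eq 0 0))"]) auto

lemma definable_pred_neg:
  assumes "definable_pred R A n Q"
  shows "definable_pred R A n (\<lambda>xs. \<not> Q xs)"
  using assms by (elim definable_predE) (rule definable_predI[where \<phi> = "Neg _"], auto)

lemma definable_pred_conj:
  assumes "definable_pred R A n Q1" and "definable_pred R A n Q2"
  shows "definable_pred R A n (\<lambda>xs. Q1 xs \<and> Q2 xs)"
proof -
  obtain ps1 \<phi>1 ps2 \<phi>2 where 1: "set ps1 \<subseteq> A" "fv \<phi>1 \<subseteq> {..<n + length ps1}"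
      "\<And>xs. length xs = n \<Longrightarrow> Q1 xs = sat UNIV R (\<lambda>i. (xs @ ps1) ! i) \<phi>1"
    and 2: "set ps2 \<subseteq> A" "fv \<phi>2 \<subseteq> {..<n + length ps2}"
      "\<And>xs. length xs = n \<Longrightarrow> Q2 xs = sat UNIV R (\<lambda>i. (xs @ ps2) ! i) \<phi>2"
    using assms by (elim definable_predE) blast
  obtain \<psi>1 where \<psi>1: "fv \<psi>1 \<subseteq> {..<n + length (ps1 @ ps2)}"
      "\<And>xs. length xs = n \<Longrightarrow> sat UNIV R (\<lambda>i. (xs @ ps1 @ ps2) ! i) \<psi>1 = sat UNIV R (\<lambda>i. (xs @ ps1) ! i) \<phi>1"
    by (rule sat_params_superlist[OF 1(2), of "ps1 @ ps2"]) auto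
  obtain \<psi>2 where \<psi>2: "fv \<psi>2 \<subseteq> {..<n + length (ps1 @ ps2)}"
      "\<And>xs. length xs = n \<Longrightarrow> sat UNIV R (\<lambda>i. (xs @ ps1 @ ps2) ! i) \<psi>2 = sat UNIV R (\<lambda>i. (xs @ ps2) ! i) \<phi>2"
    by (rule sat_params_superlist[OF 2(2), of "ps1 @ ps2"]) auto
  show ?thesis
    by (rule definable_predI[where ps = "ps1 @ ps2" and \<phi> = "Conj \<psi>1 \<psi>2"])
      (use 1 2 \<psi>1 \<psi>2 in auto)
qed

lemma definable_pred_imp:
  assumes "definable_pred R A n Q1" and "definable_pred R A n Q2"
  shows "definable_pred R A n (\<lambda>xs. Q1 xs \<longrightarrow> Q2 xs)"
  using definable_pred_neg[OF definable_pred_conj[OF assms(1) definable_pred_neg[OF assms(2)]]]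
  by simp

lemma definable_pred_reindex:
  assumes "definable_pred R A m Q" and "length \<sigma> = m" and "\<forall>j\<in>set \<sigma>. j < n"
  shows "definable_pred R A n (\<lambda>xs. Q (map (\<lambda>j. xs ! j) \<sigma>))"
proof -
  obtain ps \<phi> where 1: "set ps \<subseteq> A" "fv \<phi> \<subseteq> {..<m + length ps}"
    "\<And>xs. length xs = m \<Longrightarrow> Q xs = sat UNIV R (\<lambda>i. (xs @ ps) ! i) \<phi>"
    using assms(1) by (rule definable_predE) blast
  define g where "g i = (if i < m then \<sigma> ! i else n + (i - m))" for i
  obtain \<psi> where \<psi>: "fv \<psi> \<subseteq> g ` fv \<phi>" "\<forall>e. sat UNIV R e \<psi> = sat UNIV R (e \<circ> g) \<phi>"
    using ex_fm_renaming by blast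
  show ?thesis
  proof (rule definable_predI[OF 1(1)])
    have "\<sigma> ! i < n" if "i < m" for i
      using that assms(2,3) by simp
    then have "g i < n + length ps" if "i \<in> fv \<phi>" for i
      using that 1(2) by (auto simp: g_def intro: trans_less_add1)
    then show "fv \<psi> \<subseteq> {..<n + length ps}"
      using \<psi>(1) by auto
    show "Q (map (\<lambda>j. xs ! j) \<sigma>) = sat UNIV R (\<lambda>i. (xs @ ps) ! i) \<psi>" if xs: "length xs = n" for xs
    proof -
      have "sat UNIV R ((\<lambda>i. (xs @ ps) ! i) \<circ> g) \<phi> = sat UNIV R (\<lambda>i. (map (\<lambda>j. xs ! j) \<sigma> @ ps) ! i) \<phi>"
        using 1(2) xs assms(2,3) by (intro sat_coincide) (auto simp: g_def nth_append)
      then show ?thesis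
        using 1(3)[of "map (\<lambda>j. xs ! j) \<sigma>"] assms(2) \<psi>(2) by simp
    qed
  qed
qed

lemma definable_pred_exists:
  assumes "definable_pred R A m Q" and "m = Suc n"
    and "\<And>xs. length xs = n \<Longrightarrow> Q' xs = (\<exists>a. Q (xs @ [a]))"
  shows "definable_pred R A n Q'"
proof -
  obtain ps \<phi> where 1: "set ps \<subseteq> A" "fv \<phi> \<subseteq> {..<Suc n + length ps}"
    "\<And>xs. length xs = Suc n \<Longrightarrow> Q xs = sat UNIV R (\<lambda>i. (xs @ ps) ! i) \<phi>"
    using assms(1) unfolding assms(2) by (rule definable_predE) blast
  \<comment> \<open>the quantified variable n is moved to the fresh index k, past the parameters\<close>
  define k where "k = n + length ps"
  define g where "g i = (if i < n then i else if i = n then k else i - 1)" for i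
  obtain \<psi> where \<psi>: "fv \<psi> \<subseteq> g ` fv \<phi>" "\<forall>e. sat UNIV R e \<psi> = sat UNIV R (e \<circ> g) \<phi>"
    using ex_fm_renaming by blast
  show ?thesis
  proof (rule definable_predI[where \<phi> = "Ex k \<psi>", OF 1(1)])
    have "g i < Suc k" if "i \<in> fv \<phi>" for i
      using that 1(2) by (auto simp: g_def k_def)
    then show "fv (Ex k \<psi>) \<subseteq> {..<n + length ps}"
      using \<psi>(1) by (fastforce simp: k_def)
    show "Q' xs = sat UNIV R (\<lambda>i. (xs @ ps) ! i) (Ex k \<psi>)" if xs: "length xs = n" for xs
    proof -
      have "sat UNIV R (((\<lambda>i. (xs @ ps) ! i)(k := a)) \<circ> g) \<phi> = sat UNIV R (\<lambda>i. ((xs @ [a]) @ ps) ! i) \<phi>" for a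
        using 1(2) xs by (intro sat_coincide) (auto simp: g_def k_def nth_append)
      then show ?thesis
        using assms(3)[OF xs] 1(3)[of "xs @ [_]"] xs \<psi>(2) by simp
    qed
  qed
qed

lemma definable_pred_forall:
  assumes "definable_pred R A m Q" and "m = Suc n"
    and "\<And>xs. length xs = n \<Longrightarrow> Q' xs = (\<forall>a. Q (xs @ [a]))"
  shows "definable_pred R A n Q'"
proof -
  have "definable_pred R A n (\<lambda>xs. \<exists>a. \<not> Q (xs @ [a]))"
    using definable_pred_neg[OF assms(1)] assms(2) by (rule definable_pred_exists) simp
  then show ?thesis
    using assms(3) by (elim definable_pred_neg[THEN definable_pred_cong]) simp
qed

lemma definable_pred_append_params:
  assumes "definable_pred R A (n + length ps) Q" and "set ps \<subseteq> A"
  shows "definable_pred R A n (\<lambda>xs. Q (xs @ ps))"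
  using assms(1) by (elim definable_predE) (rule definable_predI[where ps = "ps @ _"], use assms(2) in auto)

lemma definable_pred_split_params:
  assumes "definable_pred R (A \<union> B) n Q"
  obtains qs Z where "set qs \<subseteq> B" and "definable_pred R A (n + length qs) Z"
    and "\<And>xs. length xs = n \<Longrightarrow> Q xs = Z (xs @ qs)"
proof -
  obtain ps \<phi> where 1: "set ps \<subseteq> A \<union> B" "fv \<phi> \<subseteq> {..<n + length ps}"
    "\<And>xs. length xs = n \<Longrightarrow> Q xs = sat UNIV R (\<lambda>i. (xs @ ps) ! i) \<phi>"
    using assms by (rule definable_predE) blast
  define qs where "qs = filter (\<lambda>p. p \<notin> A) ps"
  define rs where "rs = filter (\<lambda>p. p \<in> A) ps"
  obtain \<psi> where \<psi>: "fv \<psi> \<subseteq> {..<n + length (qs @ rs)}"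
      "\<And>xs. length xs = n \<Longrightarrow> sat UNIV R (\<lambda>i. (xs @ qs @ rs) ! i) \<psi> = sat UNIV R (\<lambda>i. (xs @ ps) ! i) \<phi>"
    by (rule sat_params_superlist[OF 1(2), of "qs @ rs"]) (auto simp: qs_def rs_def)
  show thesis
  proof (rule that[of qs "\<lambda>zs. sat UNIV R (\<lambda>i. (zs @ rs) ! i) \<psi>"])
    show "set qs \<subseteq> B" using 1(1) by (auto simp: qs_def)
    show "definable_pred R A (n + length qs) (\<lambda>zs. sat UNIV R (\<lambda>i. (zs @ rs) ! i) \<psi>)"
      by (rule definable_predI[where ps = rs]) (use \<psi>(1) in \<open>auto simp: rs_def\<close>)
    show "Q xs = sat UNIV R (\<lambda>i. ((xs @ qs) @ rs) ! i) \<psi>" if "length xs = n" for xs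
      using that 1(3) \<psi>(2) by simp
  qed
qed

lemma definable_pred_all_below:
  fixes k :: nat
  assumes "\<And>i. i < k \<Longrightarrow> definable_pred R A n (Q i)"
  shows "definable_pred R A n (\<lambda>xs. \<forall>i<k. Q i xs)"
  using assms
proof (induction k)
  case 0
  show ?case
    using definable_pred_neg[OF definable_pred_false] by simp
next
  case (Suc k)
  have "definable_pred R A n (\<lambda>xs. (\<forall>i<k. Q i xs) \<and> Q k xs)"
    using Suc by (intro definable_pred_conj) auto
  then show ?case by (rule definable_pred_cong) (auto simp: less_Suc_eq)
qed

lemma definable_in_singleton_iff:
  "definable_in UNIV R A 1 {[b]} \<longleftrightarrow> definable_pred R A 1 (\<lambda>xs. xs ! 0 = b)"
proof -
  have "{[b]} = {xs. length xs = 1 \<and> xs ! 0 = b}"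
    by (auto simp: length_Suc_conv)
  then show ?thesis
    unfolding definable_pred_def by simp
qed

lemma dcl_iff: "b \<in> dcl R A \<longleftrightarrow> definable_pred R A 1 (\<lambda>xs. xs ! 0 = b)"
  unfolding dcl_def L_def_def definable_in_singleton_iff by simp

lemma dcl_subset: "A \<subseteq> dcl R A"
  by (auto simp: dcl_iff intro: definable_pred_eq_const)

lemma dcl_mono: "A \<subseteq> B \<Longrightarrow> dcl R A \<subseteq> dcl R B"
  by (auto simp: dcl_iff intro: definable_pred_mono)

lemma definable_pred_dcl_param:
  assumes "definable_pred R C (Suc n) Z" and "q \<in> dcl R C"
  shows "definable_pred R C n (\<lambda>xs. Z (xs @ [q]))"
proof -
  have "definable_pred R C (Suc n) (\<lambda>us. map (\<lambda>j. us ! j) [n] ! 0 = q)"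
    using assms(2) unfolding dcl_iff by (rule definable_pred_reindex) auto
  then have "definable_pred R C (Suc n) (\<lambda>us. us ! n = q \<and> Z us)"
    using assms(1) by (intro definable_pred_conj) auto
  then show ?thesis
    by (rule definable_pred_exists) (auto simp: nth_append)
qed

lemma definable_pred_dcl_params:
  assumes "definable_pred R C (n + length qs) Z" and "set qs \<subseteq> dcl R C"
  shows "definable_pred R C n (\<lambda>xs. Z (xs @ qs))"
  using assms
proof (induction qs arbitrary: n)
  case (Cons q qs)
  then have "definable_pred R C (Suc n) (\<lambda>ys. Z (ys @ qs))"
    by simp
  then show ?case
    using definable_pred_dcl_param Cons.prems(2) by fastforce
qed simp

lemma definable_pred_over_dcl:
  assumes "definable_pred R A n Q" and "A \<subseteq> dcl R C"
  shows "definable_pred R C n Q"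
proof -
  have "definable_pred R (C \<union> A) n Q"
    using assms(1) by (rule definable_pred_mono) blast
  then obtain qs Z where "set qs \<subseteq> A" "definable_pred R C (n + length qs) Z"
    and Q: "\<And>xs. length xs = n \<Longrightarrow> Q xs = Z (xs @ qs)"
    by (rule definable_pred_split_params) blast
  then have "definable_pred R C n (\<lambda>xs. Z (xs @ qs))"
    using assms(2) by (intro definable_pred_dcl_params) auto
  then show ?thesis
    by (rule definable_pred_cong) (simp add: Q)
qed

lemma dcl_subset_dcl: "A \<subseteq> dcl R C \<Longrightarrow> dcl R A \<subseteq> dcl R C"
  by (auto simp: dcl_iff intro: definable_pred_over_dcl)

lemma dcl_finite_subset:
  assumes "b \<in> dcl R (A \<union> D)"
  obtains F where "finite F" "F \<subseteq> A" "b \<in> dcl R (F \<union> D)"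
proof -
  obtain F where "finite F" "F \<subseteq> A \<union> D" "definable_pred R F 1 (\<lambda>xs. xs ! 0 = b)"
    using assms unfolding dcl_iff by (rule definable_pred_finite_params)
  then have "finite (F \<inter> A)" "b \<in> dcl R ((F \<inter> A) \<union> D)"
    unfolding dcl_iff by (auto elim: definable_pred_mono)
  then show thesis
    using that by blast
qed

lemma dcl_insert_function:
  assumes "b \<in> dcl R (insert a C)"
  obtains F where "definable_pred R C 2 (\<lambda>us. F (us ! 0) (us ! 1))" and "F a b"
    and "\<And>x y y'. F x y \<Longrightarrow> F x y' \<Longrightarrow> y = y'"
proof -
  have "definable_pred R (C \<union> {a}) 1 (\<lambda>xs. xs ! 0 = b)"
    using assms by (simp add: dcl_iff)
  then obtain qs Z where qs: "set qs \<subseteq> {a}" "definable_pred R C (1 + length qs) Z"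
    and Z: "\<And>xs. length xs = 1 \<Longrightarrow> (xs ! 0 = b) = Z (xs @ qs)"
    by (rule definable_pred_split_params) blast
  \<comment> \<open>G x y: the formula defining b over C and a, with x in place of a and y in place of b\<close>
  define G where "G x y = Z (y # map (\<lambda>_. x) qs)" for x y
  have G: "definable_pred R C n (\<lambda>us. G (us ! i) (us ! j))" if "i < n" "j < n" for n i j
    using definable_pred_reindex[OF qs(2), of "j # map (\<lambda>_. i) qs" n] that
    by (simp add: G_def comp_def)
  define F where "F x y \<longleftrightarrow> G x y \<and> (\<forall>y'. G x y' \<longrightarrow> y' = y)" for x y
  show thesis
  proof (rule that[of F])
    have "definable_pred R C 3 (\<lambda>us. G (us ! 0) (us ! 2) \<longrightarrow> us ! 2 = us ! 1)"
      by (intro definable_pred_imp G definable_pred_eq) auto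
    then have "definable_pred R C 2 (\<lambda>us. \<forall>y'. G (us ! 0) y' \<longrightarrow> y' = us ! 1)"
      by (rule definable_pred_forall) (simp_all add: nth_append)
    then show "definable_pred R C 2 (\<lambda>us. F (us ! 0) (us ! 1))"
      unfolding F_def by (intro definable_pred_conj G) auto
    have "map (\<lambda>_. a) qs = qs"
      using qs(1) by (induction qs) auto
    then have "G a y \<longleftrightarrow> y = b" for y
      using Z[of "[y]"] by (simp add: G_def)
    then show "F a b"
      by (simp add: F_def)
  qed (auto simp: F_def)
qed

section \<open>The expansion by P and the induced structure on P\<close>

lemma fv_map_fm: "fv (map_fm f \<phi>) = fv \<phi>"
  by (induction \<phi>) auto

lemma sat_map_fm_Some: "sat U (exp_rel R P) e (map_fm Some \<phi>) = sat U R e \<phi>"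
  by (induction \<phi> arbitrary: e) (auto simp: exp_rel_def)

lemma definable_pred_expansion:
  assumes "definable_pred R A n Q"
  shows "definable_pred (exp_rel R P) A n Q"
  using assms by (elim definable_predE)
    (rule definable_predI[where \<phi> = "map_fm Some _"], auto simp: fv_map_fm sat_map_fm_Some)

lemma definable_pred_in_P: "definable_pred (exp_rel R P) A n (\<lambda>xs. set xs \<subseteq> P)"
proof -
  have "definable_pred (exp_rel R P) A n (\<lambda>xs. \<forall>i<n. map (\<lambda>j. xs ! j) [i] \<in> exp_rel R P None)"
    by (intro definable_pred_all_below definable_pred_rel) auto
  then show ?thesis
    by (rule definable_pred_cong) (auto simp: exp_rel_def subset_code(1) all_set_conv_all_nth)
qed

lemma definable_pred_ind_rel:
  assumes "\<forall>j\<in>set vs. j < m"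
  shows "definable_pred (exp_rel R P) D m (\<lambda>xs. set xs \<subseteq> P \<and> map (\<lambda>j. xs ! j) vs \<in> ind_rel R P D s)"
proof -
  obtain \<phi> k d where s: "s = (\<phi>, k, d)"
    by (cases s)
  show ?thesis
  proof (cases "set d \<subseteq> D \<and> fv \<phi> \<subseteq> {..<k + length d} \<and> length vs = k")
    case True
    have "definable_pred R D k (\<lambda>a. sat UNIV R (\<lambda>i. (a @ d) ! i) \<phi>)"
      by (rule definable_predI[where ps = d]) (use True in auto)
    then have "definable_pred (exp_rel R P) D m
        (\<lambda>xs. set xs \<subseteq> P \<and> sat UNIV R (\<lambda>i. (map (\<lambda>j. xs ! j) vs @ d) ! i) \<phi>)"
      using True assms
      by (intro definable_pred_conj definable_pred_in_P definable_pred_reindex definable_pred_expansion) auto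
    then show ?thesis
      by (rule definable_pred_cong) (use True assms in \<open>auto simp: s ind_rel_def\<close>)
  next
    case False
    show ?thesis
      by (rule definable_pred_cong[OF definable_pred_false]) (use False in \<open>auto simp: s ind_rel_def\<close>)
  qed
qed

lemma definable_pred_relativized_Ex:
  fixes P :: "'a set"
  assumes "definable_pred (exp_rel R P) A m' (\<lambda>xs. set xs \<subseteq> P \<and> sat P I (\<lambda>i. xs ! i) \<psi>)"
    and "fv \<psi> \<subseteq> insert k {..<m}" and "fv \<psi> \<subseteq> {..<m'}" and "k < m'"
  shows "definable_pred (exp_rel R P) A m (\<lambda>xs. set xs \<subseteq> P \<and> sat P I (\<lambda>i. xs ! i) (Ex k \<psi>))"
proof -
  \<comment> \<open>variable k (and every unused index) is read from the new last variable m\<close>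
  define \<sigma> where "\<sigma> = map (\<lambda>j. if j < m \<and> j \<noteq> k then j else m) [0..<m']"
  define L where "L xs a = map (\<lambda>j. (xs @ [a]) ! j) \<sigma>" for xs and a :: 'a
  have "definable_pred (exp_rel R P) A (Suc m) (\<lambda>us. set (map (\<lambda>j. us ! j) \<sigma>) \<subseteq> P \<and>
      sat P I (\<lambda>i. map (\<lambda>j. us ! j) \<sigma> ! i) \<psi>)"
    using assms(1) by (rule definable_pred_reindex) (auto simp: \<sigma>_def)
  then have "definable_pred (exp_rel R P) A m (\<lambda>xs. set xs \<subseteq> P \<and>
      (\<exists>a. set (L xs a) \<subseteq> P \<and> sat P I (\<lambda>i. L xs a ! i) \<psi>))"
    by (intro definable_pred_conj definable_pred_in_P, rule definable_pred_exists) (simp_all add: L_def)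
  then show ?thesis
  proof (rule definable_pred_cong)
    fix xs :: "'a list" assume xs: "length xs = m"
    have nth_L: "L xs a ! j = (if j < m \<and> j \<noteq> k then xs ! j else a)" if "j < m'" for a j
      using that xs by (simp add: L_def \<sigma>_def nth_append)
    have len_L: "length (L xs a) = m'" for a
      by (simp add: L_def \<sigma>_def)
    have "set (L xs a) \<subseteq> P \<longleftrightarrow> a \<in> P" if "set xs \<subseteq> P" for a
    proof
      show "a \<in> P" if "set (L xs a) \<subseteq> P"
        using that nth_mem[of k "L xs a"] nth_L[of k a] assms(4) len_L by auto
      have "xs ! i \<in> P" if "i < m" for i
        using \<open>set xs \<subseteq> P\<close> nth_mem[of i xs] that xs by blast
      then show "set (L xs a) \<subseteq> P" if "a \<in> P"
        using that nth_L by (auto simp: in_set_conv_nth len_L)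
    qed
    moreover have "sat P I (\<lambda>i. L xs a ! i) \<psi> = sat P I ((\<lambda>i. xs ! i)(k := a)) \<psi>" for a
    proof (rule sat_coincide)
      fix v assume "v \<in> fv \<psi>"
      then have "v < m'" "v = k \<or> v < m"
        using assms(2,3) by auto
      then show "L xs a ! v = ((\<lambda>i. xs ! i)(k := a)) v"
        using nth_L[of v a] by auto
    qed
    ultimately show "(set xs \<subseteq> P \<and> (\<exists>a. set (L xs a) \<subseteq> P \<and> sat P I (\<lambda>i. L xs a ! i) \<psi>)) =
        (set xs \<subseteq> P \<and> sat P I (\<lambda>i. xs ! i) (Ex k \<psi>))"
      by auto
  qed
qed

lemma definable_pred_ind_sat:
  assumes "fv \<psi> \<subseteq> {..<m}"
  shows "definable_pred (exp_rel R P) D m (\<lambda>xs. set xs \<subseteq> P \<and> sat P (ind_rel R P D) (\<lambda>i. xs ! i) \<psi>)"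
  using assms
proof (induction \<psi> arbitrary: m)
  case (Eq i j)
  then show ?case
    by (simp, intro definable_pred_conj definable_pred_in_P definable_pred_eq) auto
next
  case (Rel s vs)
  then have "\<forall>j\<in>set vs. j < m"
    by auto
  then show ?case
    by (simp add: definable_pred_ind_rel)
next
  case (Neg \<psi>)
  then have "definable_pred (exp_rel R P) D m (\<lambda>xs. set xs \<subseteq> P \<and> sat P (ind_rel R P D) (\<lambda>i. xs ! i) \<psi>)"
    by simp
  then have "definable_pred (exp_rel R P) D m (\<lambda>xs. set xs \<subseteq> P \<and>
      \<not> (set xs \<subseteq> P \<and> sat P (ind_rel R P D) (\<lambda>i. xs ! i) \<psi>))"
    by (rule definable_pred_conj[OF definable_pred_in_P definable_pred_neg])
  then show ?case
    by (rule definable_pred_cong) auto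
next
  case (Conj \<psi>1 \<psi>2)
  then have "definable_pred (exp_rel R P) D m (\<lambda>xs.
      (set xs \<subseteq> P \<and> sat P (ind_rel R P D) (\<lambda>i. xs ! i) \<psi>1) \<and>
      (set xs \<subseteq> P \<and> sat P (ind_rel R P D) (\<lambda>i. xs ! i) \<psi>2))"
    by (intro definable_pred_conj[OF Conj.IH(1) Conj.IH(2)]) simp_all
  then show ?case
    by (rule definable_pred_cong) auto
next
  case (Ex k \<psi>)
  then have "fv \<psi> \<subseteq> {..<max m (Suc k)}"
    by auto
  then show ?case
    by (rule definable_pred_relativized_Ex[OF Ex.IH]) (use Ex.prems in auto)
qed

lemma box_closure_singleton:
  fixes b c :: "'a::linordered_ab_group_add"
  assumes "0 < c"
  shows "box_closure 1 {[b]} = {[b]}"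
proof
  show "{[b]} \<subseteq> box_closure 1 {[b]}"
    unfolding box_closure_def by auto
  show "box_closure 1 {[b]} \<subseteq> {[b]}"
  proof
    fix x assume x: "x \<in> box_closure 1 {[b]}"
    then obtain y where y: "x = [y]"
      by (auto simp: box_closure_def length_Suc_conv)
    have box: "p < b \<and> b < q" if "p < y" "y < q" for p q
    proof -
      have near_y: "\<forall>a b'. length a = 1 \<and> length b' = 1 \<and> (\<forall>i<1. a ! i < [y] ! i \<and> [y] ! i < b' ! i) \<longrightarrow>
          (\<exists>v\<in>{[b]}. length v = 1 \<and> (\<forall>i<1. a ! i < v ! i \<and> v ! i < b' ! i))"
        using x unfolding box_closure_def y by blast
      then show ?thesis
        using spec[OF spec[OF near_y, of "[p]"], of "[q]"] that by simp
    qed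
    have "y = b"
      using box[of "y - c" b] box[of b "y + c"] assms
      by (cases y b rule: linorder_cases) auto
    then show "x \<in> {[b]}"
      using y by simp
  qed
qed

lemma dcl_indep_disjoint:
  assumes "dcl_indep R P D"
  shows "D \<inter> P = {}"
proof -
  have "d \<notin> P" if "d \<in> D" for d
    using assms that dcl_subset[of "(D - {d}) \<union> P" R] unfolding dcl_indep_def by blast
  then show ?thesis
    by blast
qed

lemma P_def_singleton_if_clD:
  assumes "b \<in> clD R P D A" and "A \<subseteq> P"
  shows "P_def R P (A \<union> D) 1 {[b]}"
proof -
  obtain \<psi> ps where ps: "set ps \<subseteq> A" "fv \<psi> \<subseteq> {..<1 + length ps}"
    and b: "{[b]} = {xs. length xs = 1 \<and> set xs \<subseteq> P \<and> sat P (ind_rel R P D) (\<lambda>i. (xs @ ps) ! i) \<psi>}"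
    using assms(1) unfolding clD_def Pind_def_def definable_in_def by blast
  have "definable_pred (exp_rel R P) (A \<union> D) (1 + length ps)
      (\<lambda>xs. set xs \<subseteq> P \<and> sat P (ind_rel R P D) (\<lambda>i. xs ! i) \<psi>)"
    using definable_pred_ind_sat[OF ps(2)] by (rule definable_pred_mono) blast
  then have "definable_pred (exp_rel R P) (A \<union> D) 1
      (\<lambda>xs. set (xs @ ps) \<subseteq> P \<and> sat P (ind_rel R P D) (\<lambda>i. (xs @ ps) ! i) \<psi>)"
    using ps(1) by (intro definable_pred_append_params) auto
  moreover have "(set (xs @ ps) \<subseteq> P \<and> sat P (ind_rel R P D) (\<lambda>i. (xs @ ps) ! i) \<psi>) = (xs ! 0 = b)"
    if "length xs = 1" for xs
  proof -
    have "xs ! 0 = b \<longleftrightarrow> xs \<in> {[b]}"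
      using that by (auto simp: length_Suc_conv)
    also have "\<dots> \<longleftrightarrow> set xs \<subseteq> P \<and> sat P (ind_rel R P D) (\<lambda>i. (xs @ ps) ! i) \<psi>"
      using that by (subst b) simp
    finally show ?thesis
      using ps(1) assms(2) by auto
  qed
  ultimately have "definable_pred (exp_rel R P) (A \<union> D) 1 (\<lambda>xs. xs ! 0 = b)"
    by (rule definable_pred_cong)
  then show ?thesis
    unfolding P_def_def definable_in_singleton_iff .
qed

lemma clD_subset_dcl:
  fixes R :: "'r \<Rightarrow> ('a::linordered_ab_group_add) list set"
  assumes "OP R P" and "dcl_indep R P D" and "A \<subseteq> P" and "0 < (c::'a)"
  shows "clD R P D A \<subseteq> dcl R (A \<union> D)"
proof
  fix b assume "b \<in> clD R P D A"
  then have "P_def R P (A \<union> D) 1 {[b]}"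
    using assms(3) by (rule P_def_singleton_if_clD)
  moreover have "(A \<union> D) - P = D"
    using assms(3) dcl_indep_disjoint[OF assms(2)] by blast
  ultimately have "L_def R (A \<union> D) 1 (box_closure 1 {[b]})"
    using assms(1,2) unfolding OP_def by simp
  then show "b \<in> dcl R (A \<union> D)"
    using box_closure_singleton[OF assms(4), of b] by (simp add: dcl_def)
qed

lemma dcl_Int_subset_clD:
  assumes "A \<subseteq> P"
  shows "dcl R (A \<union> D) \<inter> P \<subseteq> clD R P D A"
proof
  fix b assume "b \<in> dcl R (A \<union> D) \<inter> P"
  then have bP: "b \<in> P" and "definable_pred R (D \<union> A) 1 (\<lambda>xs. xs ! 0 = b)"
    by (auto simp: dcl_iff Un_commute)
  from this(2) obtain qs Z where qs: "set qs \<subseteq> A" "definable_pred R D (1 + length qs) Z"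
    and Z: "\<And>xs. length xs = 1 \<Longrightarrow> (xs ! 0 = b) = Z (xs @ qs)"
    by (rule definable_pred_split_params) blast
  obtain ds \<phi> where ds: "set ds \<subseteq> D" "fv \<phi> \<subseteq> {..<(1 + length qs) + length ds}"
    and \<phi>: "\<And>us. length us = 1 + length qs \<Longrightarrow> Z us = sat UNIV R (\<lambda>i. (us @ ds) ! i) \<phi>"
    using qs(2) by (rule definable_predE) blast
  \<comment> \<open>Z itself is a relation symbol of the induced structure\<close>
  define \<psi> where "\<psi> = Rel (\<phi>, Suc (length qs), ds) [0..<Suc (length qs)]"
  have "sat P (ind_rel R P D) (\<lambda>i. (xs @ qs) ! i) \<psi> \<longleftrightarrow> set (xs @ qs) \<subseteq> P \<and> Z (xs @ qs)"
    if "length xs = 1" for xs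
  proof -
    have "map (\<lambda>i. (xs @ qs) ! i) [0..<Suc (length qs)] = xs @ qs"
      using that map_nth[of "xs @ qs"] by simp
    then show ?thesis
      using that ds \<phi>[of "xs @ qs"] by (simp add: \<psi>_def ind_rel_def)
  qed
  then have "xs \<in> {[b]} \<longleftrightarrow> length xs = 1 \<and> set xs \<subseteq> P \<and> sat P (ind_rel R P D) (\<lambda>i. (xs @ qs) ! i) \<psi>"
    for xs
    using Z[of xs] bP qs(1) assms by (cases "length xs = 1") (auto simp: length_Suc_conv)
  then have "{[b]} = {xs. length xs = 1 \<and> set xs \<subseteq> P \<and> sat P (ind_rel R P D) (\<lambda>i. (xs @ qs) ! i) \<psi>}"
    by blast
  moreover have "fv \<psi> \<subseteq> {..<1 + length qs}"
    by (auto simp: \<psi>_def)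
  ultimately have "Pind_def R P D A 1 {[b]}"
    unfolding Pind_def_def definable_in_def using qs(1) by blast
  then show "b \<in> clD R P D A"
    using bP unfolding clD_def by simp
qed

lemma clD_eq_dcl_Int:
  fixes R :: "'r \<Rightarrow> ('a::linordered_ab_group_add) list set"
  assumes "OP R P" and "dcl_indep R P D" and "A \<subseteq> P" and "0 < (c::'a)"
  shows "clD R P D A = dcl R (A \<union> D) \<inter> P"
  using clD_subset_dcl[OF assms] dcl_Int_subset_clD[OF assms(3)] by (auto simp: clD_def)

section \<open>Unary definable sets and the order topology\<close>

definition definable_set :: "('r \<Rightarrow> 'a list set) \<Rightarrow> 'a set \<Rightarrow> 'a set \<Rightarrow> bool" where
  "definable_set R A S \<longleftrightarrow> definable_pred R A 1 (\<lambda>xs. xs ! 0 \<in> S)"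

lemma definable_pred_member:
  assumes "definable_set R A S" and "i < n"
  shows "definable_pred R A n (\<lambda>xs. xs ! i \<in> S)"
  using definable_pred_reindex[of R A 1 "\<lambda>xs. xs ! 0 \<in> S" "[i]" n] assms
  by (simp add: definable_set_def)

lemma definable_set_fiber:
  assumes "definable_pred R A 2 (\<lambda>us. F (us ! 0) (us ! 1))" and "y \<in> A"
  shows "definable_set R A {w. F w y}"
proof -
  have "definable_pred R A (1 + length [y]) (\<lambda>us. F (us ! 0) (us ! 1))"
    using assms(1) by (simp add: numeral_2_eq_2)
  from definable_pred_append_params[OF this] assms(2)
  have "definable_pred R A 1 (\<lambda>xs. F ((xs @ [y]) ! 0) ((xs @ [y]) ! 1))"
    by simp
  then show ?thesis
    unfolding definable_set_def by (rule definable_pred_cong) (auto simp: length_Suc_conv)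
qed

definition nbhd :: "'a::linorder set \<Rightarrow> 'a \<Rightarrow> bool" where
  "nbhd S z \<longleftrightarrow> (\<exists>u v. u < z \<and> z < v \<and> {u<..<v} \<subseteq> S)"

lemma nbhd_mem: "nbhd S z \<Longrightarrow> z \<in> S"
  unfolding nbhd_def by auto

lemma nbhd_mono: "nbhd S z \<Longrightarrow> S \<subseteq> T \<Longrightarrow> nbhd T z"
  unfolding nbhd_def by blast

lemma point_or_interval_convex:
  assumes "is_point_or_interval I" and "p \<in> I" "q \<in> I"
  shows "{p<..<q} \<subseteq> I"
  using assms unfolding is_point_or_interval_def by (elim disjE exE conjE) auto

lemma point_or_interval_unbounded:
  assumes "is_point_or_interval I" and "\<not> bdd_above I"
  obtains a where "{a<..} \<subseteq> I"
proof -
  have "\<exists>a. {a<..} \<subseteq> I"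
    using assms unfolding is_point_or_interval_def by (elim disjE exE conjE) auto
  then show thesis
    using that by blast
qed

lemma bdd_above_Union:
  fixes \<I> :: "'a::linorder set set"
  assumes "finite \<I>" and "\<And>I. I \<in> \<I> \<Longrightarrow> bdd_above I"
  shows "bdd_above (\<Union>\<I>)"
  using assms
proof (induction rule: finite_induct)
  case (insert I \<I>)
  then obtain a b where "\<forall>x\<in>I. x \<le> a" "\<forall>x\<in>\<Union>\<I>. x \<le> b"
    unfolding bdd_above_def by (meson insertI1 insert_iff)
  then have "\<forall>x\<in>I \<union> \<Union>\<I>. x \<le> max a b"
    by (auto simp: le_max_iff_disj)
  then show ?case
    unfolding bdd_above_def by auto
qed simp

lemma isLub_UNIV_iff:
  "isLub UNIV S s \<longleftrightarrow> (\<forall>z\<in>S. z \<le> s) \<and> (\<forall>t. (\<forall>z\<in>S. z \<le> t) \<longrightarrow> s \<le> t)"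
  by (auto simp: isLub_def leastP_def isUb_def setle_def setge_def)

lemma isLub_UNIV_I:
  fixes b :: "'a::linorder"
  assumes "\<forall>z\<in>S. z \<le> b" and "\<And>t. t < b \<Longrightarrow> \<exists>z\<in>S. t < z"
  shows "isLub UNIV S b"
  unfolding isLub_UNIV_iff using assms by (meson leD le_less_linear)

lemma isLub_UNIV_Un:
  fixes a b :: "'a::linorder"
  shows "isLub UNIV A a \<Longrightarrow> isLub UNIV B b \<Longrightarrow> isLub UNIV (A \<union> B) (max a b)"
  unfolding isLub_UNIV_iff by (auto simp: max_def)

section \<open>O-minimal expansions of ordered groups\<close>

locale o_minimal =
  fixes R :: "'r \<Rightarrow> ('a::linordered_ab_group_add) list set"
  assumes o_minimal: "omin_og R"
begin

lemma o_minimal_signature: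
  obtains lt pl c where "R lt = {[x, y] | x y. x < y}" and "R pl = {[x, y, z] | x y z. z = x + y}"
    and "(0::'a) < c"
  using o_minimal[unfolded omin_og_def, THEN conjunct1] by (elim exE conjE)

lemma ex_pos: "\<exists>c::'a. 0 < c"
  by (rule o_minimal_signature) (rule exI)

lemma definable_pred_less:
  assumes "i < n" "j < n"
  shows "definable_pred R A n (\<lambda>xs. xs ! i < xs ! j)"
proof -
  obtain lt where lt: "R lt = {[x, y] | x y. x < y}"
    by (rule o_minimal_signature)
  have "definable_pred R A n (\<lambda>xs. map (\<lambda>k. xs ! k) [i, j] \<in> R lt)"
    by (rule definable_pred_rel) (use assms in auto)
  then show ?thesis
    by (rule definable_pred_cong) (simp add: lt)
qed

lemma definable_pred_plus:
  assumes "i < n" "j < n" "k < n"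
  shows "definable_pred R A n (\<lambda>xs. xs ! k = xs ! i + xs ! j)"
proof -
  obtain pl where pl: "R pl = {[x, y, z] | x y z. z = x + y}"
    by (rule o_minimal_signature)
  have "definable_pred R A n (\<lambda>xs. map (\<lambda>m. xs ! m) [i, j, k] \<in> R pl)"
    by (rule definable_pred_rel) (use assms in auto)
  then show ?thesis
    by (rule definable_pred_cong) (simp add: pl)
qed

lemma definable_pred_le:
  assumes "i < n" "j < n"
  shows "definable_pred R A n (\<lambda>xs. xs ! i \<le> xs ! j)"
  using definable_pred_neg[OF definable_pred_less[OF assms(2,1)]]
  by (rule definable_pred_cong) (simp add: not_less)

lemma definable_pred_const_less:
  assumes "p \<in> A" "i < n"
  shows "definable_pred R A n (\<lambda>xs. p < xs ! i)"
proof -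
  have "definable_pred R A (n + length [p]) (\<lambda>xs. xs ! n < xs ! i)"
    using assms(2) by (intro definable_pred_less) auto
  from definable_pred_append_params[OF this] assms(1)
  have "definable_pred R A n (\<lambda>xs. (xs @ [p]) ! n < (xs @ [p]) ! i)"
    by simp
  then show ?thesis
    by (rule definable_pred_cong) (use assms(2) in \<open>simp add: nth_append\<close>)
qed

lemma definable_pred_less_const:
  assumes "p \<in> A" "i < n"
  shows "definable_pred R A n (\<lambda>xs. xs ! i < p)"
proof -
  have "definable_pred R A (n + length [p]) (\<lambda>xs. xs ! i < xs ! n)"
    using assms(2) by (intro definable_pred_less) auto
  from definable_pred_append_params[OF this] assms(1)
  have "definable_pred R A n (\<lambda>xs. (xs @ [p]) ! i < (xs @ [p]) ! n)"
    by simp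
  then show ?thesis
    by (rule definable_pred_cong) (use assms(2) in \<open>simp add: nth_append\<close>)
qed

lemma definable_pred_const_le:
  assumes "p \<in> A" "i < n"
  shows "definable_pred R A n (\<lambda>xs. p \<le> xs ! i)"
  using definable_pred_neg[OF definable_pred_less_const[OF assms]]
  by (rule definable_pred_cong) (simp add: not_less)

lemma definable_set_interval:
  assumes "a \<in> A" "b \<in> A"
  shows "definable_set R A {a<..<b}"
proof -
  have "definable_pred R A 1 (\<lambda>xs. a < xs ! 0 \<and> xs ! 0 < b)"
    using assms by (intro definable_pred_conj definable_pred_const_less definable_pred_less_const) auto
  then show ?thesis
    unfolding definable_set_def by (rule definable_pred_cong) simp
qed

lemma definable_set_pieces:
  assumes "definable_set R A S"
  obtains \<I> where "finite \<I>" "\<forall>I\<in>\<I>. is_point_or_interval I" "S = \<Union>\<I>"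
proof -
  have "L_def R UNIV 1 {xs. length xs = 1 \<and> xs ! 0 \<in> S}"
    using definable_pred_mono[OF assms[unfolded definable_set_def]]
    unfolding L_def_def definable_pred_def by simp
  then have "\<exists>\<I>. finite \<I> \<and> (\<forall>I\<in>\<I>. is_point_or_interval I) \<and>
      {xs. length xs = 1 \<and> xs ! 0 \<in> S} = (\<lambda>x. [x]) ` \<Union>\<I>"
    by (rule o_minimal[unfolded omin_og_def, THEN conjunct2, rule_format])
  then obtain \<I> where \<I>: "finite \<I>" "\<forall>I\<in>\<I>. is_point_or_interval I"
      "{xs. length xs = 1 \<and> xs ! 0 \<in> S} = (\<lambda>x. [x]) ` \<Union>\<I>"
    by blast
  have "x \<in> S \<longleftrightarrow> x \<in> \<Union>\<I>" for x
  proof -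
    have "x \<in> S \<longleftrightarrow> [x] \<in> {xs. length xs = 1 \<and> xs ! 0 \<in> S}"
      by simp
    also have "\<dots> \<longleftrightarrow> [x] \<in> (\<lambda>x. [x]) ` \<Union>\<I>"
      by (simp only: \<I>(3))
    also have "\<dots> \<longleftrightarrow> x \<in> \<Union>\<I>"
      by blast
    finally show ?thesis .
  qed
  then show thesis
    using that \<I>(1,2) by blast
qed

lemma definable_set_unbounded:
  assumes "definable_set R A S" and "\<not> bdd_above S"
  obtains a where "{a<..} \<subseteq> S"
proof -
  obtain \<I> where \<I>: "finite \<I>" "\<forall>I\<in>\<I>. is_point_or_interval I" "S = \<Union>\<I>"
    using assms(1) by (rule definable_set_pieces)
  then have "\<exists>I\<in>\<I>. \<not> bdd_above I"
    using assms(2) bdd_above_Union[OF \<I>(1)] by auto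
  then obtain I where "I \<in> \<I>" "\<not> bdd_above I"
    by auto
  moreover have "is_point_or_interval I"
    using \<I>(2) \<open>I \<in> \<I>\<close> by blast
  ultimately obtain a where "{a<..} \<subseteq> I"
    by (metis point_or_interval_unbounded)
  then show thesis
    using that \<I>(3) \<open>I \<in> \<I>\<close> by blast
qed

lemma dense:
  fixes x y :: 'a
  assumes "x < y"
  shows "\<exists>z. x < z \<and> z < y"
proof (rule ccontr)
  assume "\<nexists>z. x < z \<and> z < y"
  \<comment> \<open>then e is the least positive element, but o-minimality makes e a double d + d with 0 < d\<close>
  define e where "e = y - x"
  have e: "0 < e" and no_smaller: "\<not> (0 < w \<and> w < e)" for w
    using assms \<open>\<nexists>z. x < z \<and> z < y\<close>[unfolded not_ex, rule_format, of "x + w"]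
    by (auto simp: e_def less_diff_eq add.commute)
  define E where "E = range (\<lambda>w::'a. w + w)"
  have "definable_pred R UNIV 2 (\<lambda>us. us ! 0 = us ! 1 + us ! 1)"
    by (rule definable_pred_plus) auto
  then have "definable_set R UNIV E"
    unfolding definable_set_def by (rule definable_pred_exists) (auto simp: E_def nth_append)
  moreover have "\<not> bdd_above E"
  proof
    assume "bdd_above E"
    then obtain B where B: "\<And>z. z \<in> E \<Longrightarrow> z \<le> B"
      unfolding bdd_above_def by blast
    have "0 < max B 0 + e" "B < max B 0 + e"
      using e by (auto simp: max_def add_strict_increasing)
    then have "B < (max B 0 + e) + (max B 0 + e)"
      by (simp add: add_strict_increasing2 less_imp_le)
    then show False
      using B[of "(max B 0 + e) + (max B 0 + e)"] by (simp add: E_def)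
  qed
  ultimately obtain a where "{a<..} \<subseteq> E"
    by (rule definable_set_unbounded)
  then have "a + e \<in> E" "a + e + e \<in> E"
    using e by (auto simp: add_strict_increasing2)
  then obtain w v where "a + e = w + w" "a + e + e = v + v"
    unfolding E_def by blast
  then have "e = (v - w) + (v - w)"
    by (simp add: algebra_simps)
  then have "0 < v - w" "v - w < e"
    using e by (auto simp: add_pos_pos)
  then show False
    using no_smaller by blast
qed

lemma infinite_interval:
  fixes x y :: 'a
  assumes "x < y"
  shows "infinite {x<..<y}"
proof
  assume fin: "finite {x<..<y}"
  moreover have "{x<..<y} \<noteq> {}"
    using dense[OF assms] by auto
  ultimately have "Max {x<..<y} \<in> {x<..<y}"
    by (rule Max_in)
  then obtain z where z: "Max {x<..<y} < z" "z < y"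
    using dense by auto
  then have "z \<in> {x<..<y}"
    using \<open>Max {x<..<y} \<in> {x<..<y}\<close> by auto
  then show False
    using Max_ge[OF fin, of z] z(1) by simp
qed

lemma point_or_interval_lub:
  fixes I :: "'a set"
  assumes "is_point_or_interval I" and "bdd_above I"
  shows "\<exists>s. isLub UNIV I s"
proof -
  obtain c :: 'a where c: "0 < c"
    using ex_pos by blast
  obtain B where B: "\<And>x. x \<in> I \<Longrightarrow> x \<le> B"
    using assms(2) unfolding bdd_above_def by auto
  have below_add_c: "y < x + c" if "y \<le> x" for x y
    using that c add_strict_increasing[of c y x] by (simp add: add.commute)
  show ?thesis
    using assms(1) unfolding is_point_or_interval_def
  proof (elim disjE exE conjE)
    fix a b assume I: "a < b" "I = {a<..<b}"
    have "\<exists>z\<in>I. t < z" if "t < b" for t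
      using dense[of "max a t" b] that I by auto
    then have "isLub UNIV I b"
      using I by (intro isLub_UNIV_I) auto
    then show ?thesis ..
  next
    fix b assume I: "I = {..<b}"
    have "\<exists>z\<in>I. t < z" if "t < b" for t
      using dense[OF that] I by auto
    then have "isLub UNIV I b"
      using I by (intro isLub_UNIV_I) auto
    then show ?thesis ..
  next
    fix a assume "I = {a<..}"
    then have "max a B + c \<in> I"
      using below_add_c[of a "max a B"] by simp
    then show ?thesis
      using B below_add_c[of B "max a B"] by fastforce
  next
    assume "I = UNIV"
    then show ?thesis
      using B[of "B + c"] below_add_c[of B B] by simp
  qed (auto simp: isLub_UNIV_iff)
qed

lemma definable_set_lub:
  assumes "definable_set R A S" and "S \<noteq> {}" and "bdd_above S"
  shows "\<exists>s. isLub UNIV S s"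
proof -
  obtain \<I> where \<I>: "finite \<I>" "\<forall>I\<in>\<I>. is_point_or_interval I" "S = \<Union>\<I>"
    using assms(1) by (rule definable_set_pieces)
  have "\<Union>\<I> \<noteq> {} \<Longrightarrow> bdd_above (\<Union>\<I>) \<Longrightarrow> \<exists>s. isLub UNIV (\<Union>\<I>) s"
    using \<I>(1,2)
  proof (induction rule: finite_induct)
    case (insert I \<I>)
    have "bdd_above I" "bdd_above (\<Union>\<I>)"
      using insert.prems(2) by (auto intro: bdd_above_mono)
    then obtain s where s: "isLub UNIV I s"
      using point_or_interval_lub insert.prems(3) by auto
    show ?case
    proof (cases "\<Union>\<I> = {}")
      case False
      then obtain s' where "isLub UNIV (\<Union>\<I>) s'"
        using insert.IH insert.prems(3) \<open>bdd_above (\<Union>\<I>)\<close> by auto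
      then show ?thesis
        using isLub_UNIV_Un[OF s] by auto
    next
      case True
      then have "I \<union> \<Union>\<I> = I"
        by blast
      then show ?thesis
        using s by auto
    qed
  qed simp
  then show ?thesis
    using assms(2,3) \<I>(3) by simp
qed

lemma definable_set_initial_segments:
  assumes "definable_set R A S" and "x \<in> A"
  shows "definable_set R A {z. x \<le> z \<and> {x..z} \<subseteq> S}"
proof -
  have "definable_pred R A 2 (\<lambda>us. x \<le> us ! 1 \<and> us ! 1 \<le> us ! 0 \<longrightarrow> us ! 1 \<in> S)"
    using assms by (intro definable_pred_imp definable_pred_conj definable_pred_const_le
        definable_pred_le definable_pred_member) auto
  then have "definable_pred R A 1 (\<lambda>xs. \<forall>w. x \<le> w \<and> w \<le> xs ! 0 \<longrightarrow> w \<in> S)"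
    by (rule definable_pred_forall) (simp_all add: nth_append)
  then have "definable_pred R A 1 (\<lambda>xs. x \<le> xs ! 0 \<and> (\<forall>w. x \<le> w \<and> w \<le> xs ! 0 \<longrightarrow> w \<in> S))"
    using assms(2) by (intro definable_pred_conj definable_pred_const_le) auto
  then show ?thesis
    unfolding definable_set_def by (rule definable_pred_cong) auto
qed

lemma definable_set_exit_point:
  assumes S: "definable_set R UNIV S" and "x \<in> S" "x < y" "y \<notin> S"
  obtains e where "x \<le> e" "e \<le> y" and "\<And>w. x \<le> w \<Longrightarrow> w < e \<Longrightarrow> w \<in> S"
    and "\<And>w. e < w \<Longrightarrow> \<not> {x..w} \<subseteq> S"
proof -
  define E where "E = {z. x \<le> z \<and> {x..z} \<subseteq> S}"
  have "definable_set R UNIV E"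
    unfolding E_def using S by (rule definable_set_initial_segments) simp
  moreover have "x \<in> E"
    using assms(2) by (auto simp: E_def)
  moreover have E_below_y: "z \<le> y" if "z \<in> E" for z
  proof (rule ccontr)
    assume "\<not> z \<le> y"
    then have "y \<in> {x..z}"
      using assms(3) by auto
    then show False
      using that assms(4) by (auto simp: E_def)
  qed
  then have "bdd_above E"
    unfolding bdd_above_def by blast
  ultimately obtain e where e: "isLub UNIV E e"
    using definable_set_lub by blast
  show thesis
  proof (rule that)
    show "x \<le> e" "e \<le> y"
      using e \<open>x \<in> E\<close> E_below_y unfolding isLub_UNIV_iff by auto
    show "w \<in> S" if "x \<le> w" "w < e" for w
    proof -
      obtain z where "z \<in> E" "w < z"
        using e \<open>w < e\<close> unfolding isLub_UNIV_iff by (meson not_le)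
      then show ?thesis
        using that(1) by (auto simp: E_def)
    qed
    show "\<not> {x..w} \<subseteq> S" if "e < w" for w
    proof
      assume "{x..w} \<subseteq> S"
      then have "w \<in> E"
        using that \<open>x \<le> e\<close> by (auto simp: E_def)
      then show False
        using e that unfolding isLub_UNIV_iff by (auto simp: not_le)
    qed
  qed
qed

lemma definable_clopen_convex_upwards:
  assumes S: "definable_set R UNIV S"
    and convex: "\<And>p q. p \<in> J \<Longrightarrow> q \<in> J \<Longrightarrow> {p<..<q} \<subseteq> J"
    and locally_constant: "\<And>z. z \<in> J \<Longrightarrow> nbhd {w. w \<in> J \<longrightarrow> (w \<in> S \<longleftrightarrow> z \<in> S)} z"
    and xy: "x \<in> J" "y \<in> J" "x < y" "x \<in> S"
  shows "y \<in> S"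
proof (rule ccontr)
  assume "y \<notin> S"
  \<comment> \<open>local constancy fails at the point e where S is first left\<close>
  then obtain e where xe: "x \<le> e" and ey: "e \<le> y" and before: "\<And>w. x \<le> w \<Longrightarrow> w < e \<Longrightarrow> w \<in> S"
    and after: "\<And>w. e < w \<Longrightarrow> \<not> {x..w} \<subseteq> S"
    using definable_set_exit_point[OF S xy(4,3)] by blast
  have J: "w \<in> J" if "x \<le> w" "w \<le> y" for w
  proof (cases "w = x \<or> w = y")
    case False
    then have "w \<in> {x<..<y}"
      using that by (auto simp: less_le)
    then show ?thesis
      using convex xy(1,2) by blast
  qed (use xy in auto)
  obtain u v where uv: "u < e" "e < v"
    and uv_const: "\<And>w. u < w \<Longrightarrow> w < v \<Longrightarrow> w \<in> J \<Longrightarrow> w \<in> S \<longleftrightarrow> e \<in> S"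
    using locally_constant[OF J[OF xe ey]] unfolding nbhd_def by (auto simp: subset_iff)
  show False
  proof (cases "e \<in> S")
    case True
    then have "e < y"
      using ey \<open>y \<notin> S\<close> by (cases "e = y") auto
    then obtain w' where w': "e < w'" "w' < min v y"
      using dense uv(2) by (metis min_less_iff_conj)
    have "w \<in> S" if "x \<le> w" "w \<le> w'" for w
      using before[of w] uv_const[of w] J[of w] that w' True uv(1)
      by (cases w e rule: linorder_cases) auto
    then show False
      using after[OF w'(1)] by auto
  next
    case False
    then have "x < e"
      using xe xy(4) by (cases "x = e") auto
    then obtain w where "max u x < w" "w < e"
      using dense uv(1) by (metis max_less_iff_conj)
    then have w: "x \<le> w" "u < w" "w < e"
      by auto
    then show False
      using before[OF w(1,3)] uv_const[OF w(2)] J[OF w(1)] uv(2) ey False by auto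
  qed
qed

lemma definable_clopen_convex:
  assumes S: "definable_set R UNIV S"
    and convex: "\<And>p q. p \<in> J \<Longrightarrow> q \<in> J \<Longrightarrow> {p<..<q} \<subseteq> J"
    and locally_constant: "\<And>z. z \<in> J \<Longrightarrow> nbhd {w. w \<in> J \<longrightarrow> (w \<in> S \<longleftrightarrow> z \<in> S)} z"
    and xy: "x \<in> J" "y \<in> J" "x \<in> S"
  shows "y \<in> S"
proof (cases x y rule: linorder_cases)
  case less
  then show ?thesis
    using definable_clopen_convex_upwards[OF assms(1-3)] xy by blast
next
  case greater
  have "definable_set R UNIV (- S)"
    using S unfolding definable_set_def by (rule definable_pred_neg[THEN definable_pred_cong]) simp
  moreover have "nbhd {w. w \<in> J \<longrightarrow> (w \<in> - S \<longleftrightarrow> z \<in> - S)} z" if "z \<in> J" for z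
    using locally_constant[OF that] by (rule nbhd_mono) auto
  ultimately show ?thesis
    using definable_clopen_convex_upwards[of "- S", OF _ convex _ xy(2,1) greater] xy(3) by auto
qed (use xy in simp)

lemma point_or_interval_nbhd:
  fixes J :: "'a set"
  assumes "is_point_or_interval J" and "x \<in> J"
  shows "J = {x} \<or> nbhd J x"
proof -
  obtain c :: 'a where "0 < c"
    using ex_pos by blast
  then have c: "x - c < x" "x < x + c"
    by simp_all
  show ?thesis
    using assms unfolding is_point_or_interval_def
  proof (elim disjE exE conjE)
    fix a b assume "J = {a<..<b}"
    then show ?thesis
      using assms(2) unfolding nbhd_def by (intro disjI2 exI[of _ a] exI[of _ b]) auto
  next
    fix a assume "J = {a<..}"
    then show ?thesis
      using assms(2) c unfolding nbhd_def by (intro disjI2 exI[of _ a] exI[of _ "x + c"]) auto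
  next
    fix b assume "J = {..<b}"
    then show ?thesis
      using assms(2) c unfolding nbhd_def by (intro disjI2 exI[of _ "x - c"] exI[of _ b]) auto
  next
    assume "J = UNIV"
    then show ?thesis
      using c unfolding nbhd_def by (intro disjI2 exI[of _ "x - c"] exI[of _ "x + c"]) auto
  qed (use assms(2) in auto)
qed

lemma definable_finite_subset_dcl:
  assumes "finite S" and "definable_set R A S"
  shows "S \<subseteq> dcl R A"
  using assms
proof (induction "card S" arbitrary: S rule: less_induct)
  case less
  show ?case
  proof (cases "S = {}")
    case False
    \<comment> \<open>the least element of S is definable, and removing it keeps S definable\<close>
    define m where "m = Min S"
    have least_m: "x \<in> S \<and> (\<forall>y. y \<in> S \<longrightarrow> x \<le> y) \<longleftrightarrow> x = m" for x
      using Min_in[OF less.prems(1) False] Min_le[OF less.prems(1)] unfolding m_def by (meson antisym)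
    have "definable_pred R A 2 (\<lambda>us. us ! 1 \<in> S \<longrightarrow> us ! 0 \<le> us ! 1)"
      using less.prems(2) by (intro definable_pred_imp definable_pred_member definable_pred_le) auto
    then have least: "definable_pred R A 1 (\<lambda>xs. \<forall>y. y \<in> S \<longrightarrow> xs ! 0 \<le> y)"
      by (rule definable_pred_forall) (simp_all add: nth_append)
    have "definable_pred R A 1 (\<lambda>xs. xs ! 0 = m)"
      using definable_pred_conj[OF less.prems(2)[unfolded definable_set_def] least]
      by (rule definable_pred_cong) (simp add: least_m)
    then have "m \<in> dcl R A"
      by (simp add: dcl_iff)
    have "definable_set R A (S - {m})"
      using definable_pred_conj[OF less.prems(2)[unfolded definable_set_def] definable_pred_neg[OF least]]
      unfolding definable_set_def by (rule definable_pred_cong) (use least_m in blast)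
    moreover have "card (S - {m}) < card S"
      using less.prems(1) least_m[of m] by (intro card_Diff1_less) auto
    ultimately have "S - {m} \<subseteq> dcl R A"
      using less.hyps[of "S - {m}"] less.prems(1) by simp
    with \<open>m \<in> dcl R A\<close> show ?thesis
      by blast
  qed simp
qed

lemma definable_pred_nbhd:
  assumes "definable_pred R A 2 (\<lambda>us. F (us ! 0) (us ! 1))"
  shows "definable_pred R A 2 (\<lambda>us. nbhd {w. F w (us ! 1)} (us ! 0))"
proof -
  \<comment> \<open>the variables are z, y, u, v, w in this order\<close>
  have "definable_pred R A 5 (\<lambda>us. F (us ! 4) (us ! 1))"
    using definable_pred_reindex[OF assms, of "[4, 1]" 5] by simp
  then have "definable_pred R A 5 (\<lambda>us. us ! 2 < us ! 4 \<and> us ! 4 < us ! 3 \<longrightarrow> F (us ! 4) (us ! 1))"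
    by (intro definable_pred_imp definable_pred_conj definable_pred_less) auto
  then have "definable_pred R A 4 (\<lambda>us. \<forall>w. us ! 2 < w \<and> w < us ! 3 \<longrightarrow> F w (us ! 1))"
    by (rule definable_pred_forall) (simp_all add: nth_append)
  then have "definable_pred R A 4 (\<lambda>us. us ! 2 < us ! 0 \<and> us ! 0 < us ! 3 \<and>
      (\<forall>w. us ! 2 < w \<and> w < us ! 3 \<longrightarrow> F w (us ! 1)))"
    by (intro definable_pred_conj definable_pred_less) auto
  then have "definable_pred R A 3 (\<lambda>us. \<exists>v. us ! 2 < us ! 0 \<and> us ! 0 < v \<and>
      (\<forall>w. us ! 2 < w \<and> w < v \<longrightarrow> F w (us ! 1)))"
    by (rule definable_pred_exists) (simp_all add: nth_append)
  then have "definable_pred R A 2 (\<lambda>us. \<exists>u v. u < us ! 0 \<and> us ! 0 < v \<and>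
      (\<forall>w. u < w \<and> w < v \<longrightarrow> F w (us ! 1)))"
    by (rule definable_pred_exists) (simp_all add: nth_append)
  then show ?thesis
    by (rule definable_pred_cong) (auto simp: nbhd_def subset_iff)
qed

lemma definable_set_constant_values:
  assumes "definable_pred R A 2 (\<lambda>us. F (us ! 0) (us ! 1))"
  shows "definable_set R A {y. \<exists>z. nbhd {w. F w y} z}"
proof -
  from definable_pred_reindex[OF definable_pred_nbhd[OF assms], of "[1, 0]" 2]
  have "definable_pred R A 2 (\<lambda>us. nbhd {w. F w (us ! 0)} (us ! 1))"
    by simp
  then show ?thesis
    unfolding definable_set_def by (rule definable_pred_exists) (auto simp: nth_append)
qed

lemma definable_set_constant_points:
  assumes "definable_pred R A 2 (\<lambda>us. F (us ! 0) (us ! 1))" and "definable_set R A T"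
  shows "definable_set R A {z. \<exists>y\<in>T. nbhd {w. F w y} z}"
proof -
  have "definable_pred R A 2 (\<lambda>us. us ! 1 \<in> T \<and> nbhd {w. F w (us ! 1)} (us ! 0))"
    using assms by (intro definable_pred_conj definable_pred_member definable_pred_nbhd) auto
  then show ?thesis
    unfolding definable_set_def by (rule definable_pred_exists) (auto simp: nth_append)
qed

lemma definable_set_nbhd:
  assumes S: "definable_set R A S" and "a \<in> S" and "a \<notin> dcl R A"
  shows "nbhd S a"
proof -
  have "definable_pred R A 2 (\<lambda>us. nbhd {w. w \<in> S} (us ! 0))"
    using S by (intro definable_pred_nbhd definable_pred_member) auto
  from definable_pred_reindex[OF this, of "[0, 0]" 1]
  have "definable_set R A {x. nbhd S x}"
    unfolding definable_set_def by simp
  then have "definable_set R A (S - {x. nbhd S x})"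
    using definable_pred_conj[OF S[unfolded definable_set_def] definable_pred_neg]
    unfolding definable_set_def by simp
  \<comment> \<open>a point of S that is not interior is an isolated piece of S\<close>
  moreover have "finite (S - {x. nbhd S x})"
  proof -
    obtain \<I> where \<I>: "finite \<I>" "\<forall>I\<in>\<I>. is_point_or_interval I" "S = \<Union>\<I>"
      using S by (rule definable_set_pieces)
    have "S - {x. nbhd S x} \<subseteq> (\<lambda>x. {x}) -` \<I>"
    proof
      fix x assume x: "x \<in> S - {x. nbhd S x}"
      then obtain J where J: "J \<in> \<I>" "x \<in> J"
        using \<I>(3) by auto
      then have "J \<subseteq> S"
        using \<I>(3) by auto
      then have "J = {x}"
        using point_or_interval_nbhd[of J x] \<I>(2) J x nbhd_mono by blast
      then show "x \<in> (\<lambda>x. {x}) -` \<I>"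
        using J(1) by simp
    qed
    moreover have "finite ((\<lambda>x. {x}) -` \<I>)"
      using \<I>(1) by (rule finite_vimageI) (simp add: inj_def)
    ultimately show ?thesis
      by (rule finite_subset)
  qed
  ultimately have "S - {x. nbhd S x} \<subseteq> dcl R A"
    by (intro definable_finite_subset_dcl)
  then show ?thesis
    using assms(2,3) by blast
qed

lemma locally_constant_finite_values:
  assumes F: "definable_pred R UNIV 2 (\<lambda>us. F (us ! 0) (us ! 1))"
    and F_fun: "\<And>x y y'. F x y \<Longrightarrow> F x y' \<Longrightarrow> y = y'"
    and \<Omega>: "definable_set R UNIV \<Omega>"
    and locally_constant: "\<And>z. z \<in> \<Omega> \<Longrightarrow> \<exists>y. nbhd {w. F w y} z"
  shows "finite {y. \<exists>z\<in>\<Omega>. F z y}"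
proof -
  obtain \<I> where \<I>: "finite \<I>" "\<forall>I\<in>\<I>. is_point_or_interval I" "\<Omega> = \<Union>\<I>"
    using \<Omega> by (rule definable_set_pieces)
  have constant_on_piece: "F z y" if J: "J \<in> \<I>" "z0 \<in> J" "z \<in> J" and "F z0 y" for J z0 z y
  proof -
    have "definable_set R UNIV {w. F w y}"
      using F by (rule definable_set_fiber) simp
    moreover have "nbhd {w. w \<in> J \<longrightarrow> (w \<in> {w. F w y} \<longleftrightarrow> z' \<in> {w. F w y})} z'" if "z' \<in> J" for z'
    proof -
      obtain y' where y': "nbhd {w. F w y'} z'"
        using locally_constant \<I>(3) J(1) \<open>z' \<in> J\<close> by blast
      then have "F z' y'"
        using nbhd_mem by fastforce
      then show ?thesis
        using y' F_fun by (elim nbhd_mono) blast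
    qed
    ultimately show "F z y"
      using definable_clopen_convex[of "{w. F w y}" J z0 z] point_or_interval_convex[of J] \<I>(2) J \<open>F z0 y\<close>
      by blast
  qed
  have "{y. \<exists>z\<in>\<Omega>. F z y} = (\<Union>J\<in>\<I>. {y. \<exists>z\<in>J. F z y})"
    using \<I>(3) by auto
  moreover have "finite {y. \<exists>z\<in>J. F z y}" if "J \<in> \<I>" for J
  proof (cases "\<exists>z\<in>J. \<exists>y. F z y")
    case True
    then obtain z0 y0 where "z0 \<in> J" "F z0 y0"
      by blast
    then have "{y. \<exists>z\<in>J. F z y} \<subseteq> {y0}"
      using constant_on_piece[OF that] F_fun by blast
    then show ?thesis
      by (rule finite_subset) simp
  qed simp
  ultimately show ?thesis
    using \<I>(1) by simp
qed

lemma dcl_exchange: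
  assumes "b \<in> dcl R (insert a C)" and "b \<notin> dcl R C"
  shows "a \<in> dcl R (insert b C)"
proof (rule ccontr)
  assume a: "a \<notin> dcl R (insert b C)"
  obtain F where F: "definable_pred R C 2 (\<lambda>us. F (us ! 0) (us ! 1))" "F a b"
    and F_fun: "\<And>x y y'. F x y \<Longrightarrow> F x y' \<Longrightarrow> y = y'"
    using assms(1) by (rule dcl_insert_function) blast
  have "definable_set R (insert b C) {w. F w b}"
    using definable_pred_mono[OF F(1)] by (intro definable_set_fiber) auto
  then have "nbhd {w. F w b} a"
    using definable_set_nbhd F(2) a by blast
  define V where "V = {y. \<exists>z. nbhd {w. F w y} z}"
  have "definable_set R C V"
    unfolding V_def using F(1) by (rule definable_set_constant_values)
  moreover have "b \<in> V"
    using \<open>nbhd {w. F w b} a\<close> by (auto simp: V_def)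
  ultimately obtain s t where st: "s < b" "b < t" "{s<..<t} \<subseteq> V"
    using definable_set_nbhd assms(2) unfolding nbhd_def by blast
  define \<Omega> where "\<Omega> = {z. \<exists>y\<in>{s<..<t}. nbhd {w. F w y} z}"
  have "definable_set R UNIV \<Omega>"
    unfolding \<Omega>_def using definable_pred_mono[OF F(1)] definable_set_interval
    by (intro definable_set_constant_points) auto
  then have "finite {y. \<exists>z\<in>\<Omega>. F z y}"
    using definable_pred_mono[OF F(1)] F_fun
    by (intro locally_constant_finite_values) (auto simp: \<Omega>_def)
  moreover have "{s<..<t} \<subseteq> {y. \<exists>z\<in>\<Omega>. F z y}"
  proof
    fix y assume "y \<in> {s<..<t}"
    then obtain z where "nbhd {w. F w y} z"
      using st(3) by (auto simp: V_def)
    then show "y \<in> {y. \<exists>z\<in>\<Omega>. F z y}"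
      using \<open>y \<in> {s<..<t}\<close> nbhd_mem by (fastforce simp: \<Omega>_def)
  qed
  ultimately show False
    using infinite_interval[of s t] st(1,2) finite_subset by fastforce
qed

lemma pregeometry_dcl_Int: "pregeometry P (\<lambda>A. dcl R (A \<union> D) \<inter> P)"
  unfolding pregeometry_def
proof (intro conjI allI impI ballI)
  fix A assume A: "A \<subseteq> P"
  then show "A \<subseteq> dcl R (A \<union> D) \<inter> P"
    using dcl_subset[of "A \<union> D" R] by auto
  have "dcl R (dcl R (A \<union> D) \<inter> P \<union> D) \<subseteq> dcl R (A \<union> D)"
    using dcl_subset[of "A \<union> D" R] by (intro dcl_subset_dcl) auto
  moreover have "dcl R (A \<union> D) \<subseteq> dcl R (dcl R (A \<union> D) \<inter> P \<union> D)"
    using A dcl_subset[of "A \<union> D" R] by (intro dcl_mono) auto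
  ultimately show "dcl R (dcl R (A \<union> D) \<inter> P \<union> D) \<inter> P = dcl R (A \<union> D) \<inter> P"
    by auto
  fix a assume a: "a \<in> dcl R (A \<union> D) \<inter> P"
  then have "a \<in> dcl R (A \<union> D)"
    by simp
  then obtain F where "finite F" "F \<subseteq> A" "a \<in> dcl R (F \<union> D)"
    by (rule dcl_finite_subset) blast
  then show "\<exists>F. finite F \<and> F \<subseteq> A \<and> a \<in> dcl R (F \<union> D) \<inter> P"
    using a by auto
next
  fix A B :: "'a set" assume "A \<subseteq> B \<and> B \<subseteq> P"
  then show "dcl R (A \<union> D) \<inter> P \<subseteq> dcl R (B \<union> D) \<inter> P"
    using dcl_mono[of "A \<union> D" "B \<union> D" R] by auto
next
  fix A a b
  assume "A \<subseteq> P \<and> a \<in> P \<and> b \<in> P \<and> b \<in> dcl R (insert a A \<union> D) \<inter> P \<and> b \<notin> dcl R (A \<union> D) \<inter> P"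
  then show "a \<in> dcl R (insert b A \<union> D) \<inter> P"
    using dcl_exchange[of b a "A \<union> D"] by auto
qed auto

end

lemma pregeometry_cong:
  assumes pg: "pregeometry X cl" and eq: "\<And>A. A \<subseteq> X \<Longrightarrow> cl' A = cl A"
  shows "pregeometry X cl'"
proof -
  have pg1: "A \<subseteq> cl A" "cl A \<subseteq> X" "cl (cl A) = cl A" if "A \<subseteq> X" for A
    using pg that unfolding pregeometry_def by simp_all
  have pg2: "cl A \<subseteq> cl B" if "A \<subseteq> B" "B \<subseteq> X" for A B
    using pg that unfolding pregeometry_def by simp
  have pg3: "\<exists>F. finite F \<and> F \<subseteq> A \<and> a \<in> cl F" if "A \<subseteq> X" "a \<in> cl A" for A a
    using pg that unfolding pregeometry_def by simp
  have pg4: "a \<in> cl (insert b A)"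
    if "A \<subseteq> X" "a \<in> X" "b \<in> X" "b \<in> cl (insert a A)" "b \<notin> cl A" for A a b
    using pg that unfolding pregeometry_def by simp
  show ?thesis
    unfolding pregeometry_def
  proof (intro conjI allI impI ballI)
    fix A assume A: "A \<subseteq> X"
    then show "A \<subseteq> cl' A" "cl' A \<subseteq> X" "cl' (cl' A) = cl' A"
      using pg1[OF A] eq by simp_all
    fix a assume "a \<in> cl' A"
    then have "\<exists>F. finite F \<and> F \<subseteq> A \<and> a \<in> cl F"
      using pg3[OF A] eq[OF A] by simp
    then obtain F where "finite F" "F \<subseteq> A" "a \<in> cl F"
      by blast
    then show "\<exists>F. finite F \<and> F \<subseteq> A \<and> a \<in> cl' F"
      using A eq[of F] by auto
  next
    fix A B assume "A \<subseteq> B \<and> B \<subseteq> X"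
    then show "cl' A \<subseteq> cl' B"
      using pg2[of A B] eq[of A] eq[of B] by auto
  next
    fix A a b assume "A \<subseteq> X \<and> a \<in> X \<and> b \<in> X \<and> b \<in> cl' (insert a A) \<and> b \<notin> cl' A"
    then show "a \<in> cl' (insert b A)"
      using pg4[of A a b] eq[of A] eq[of "insert a A"] eq[of "insert b A"] by auto
  qed
qed

theorem corollary3p7:
  fixes R :: "'r \<Rightarrow> ('a::linordered_ab_group_add) list set"
    and P D :: "'a set"
  assumes "omin_og R"
    and "dcl_indep R P D"
    and "OP R P"
    and "ind_D R P D"
  shows "(\<forall>A. A \<subseteq> P \<longrightarrow> clD R P D A = dcl R (A \<union> D) \<inter> P) \<and> pregeometry P (clD R P D)"
proof -
  interpret o_minimal R
    by (rule o_minimal.intro) (rule assms(1))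
  obtain c :: 'a where "0 < c"
    using ex_pos by blast
  have clD_eq: "clD R P D A = dcl R (A \<union> D) \<inter> P" if "A \<subseteq> P" for A
    using assms(3,2) that \<open>0 < c\<close> by (rule clD_eq_dcl_Int)
  then have "pregeometry P (clD R P D)"
    by (intro pregeometry_cong[OF pregeometry_dcl_Int])
  with clD_eq show ?thesis
    by blast
qed

end
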